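(* In the setting described in the context, assume $t$ is prime, and let $O_{i_1},\dots,O_{i_{s(p,t)}}$ be representatives of the orbits of the action of $\langle\tau\rangle$ on $\{O_1,\dots,O_{t-1}\}$ (where $\tau(O_i)=O_{pi\bmod t}$). Then $$w_0+\frac{t-1}{s(p,t)}\sum_{j=1}^{s(p,t)}w_{i_j}=q+1,\qquad w_0^2+\frac{t-1}{s(p,t)}\sum_{j=1}^{s(p,t)}w_{i_j}^2=\frac{q^2+(t+1)q+1}{t}.$$
   Context: Let $q=p^h$ with $p$ prime, $h\ge1$. Let $\alpha$ be a primitive element of $\mathbb{F}_{q^3}$; the points of $PG(2,q)$ are the 1-dimensional $\mathbb{F}_q$-subspaces of $\mathbb{F}_{q^3}$, and $P_i$ denotes the point represented by $\alpha^i$, so $PG(2,q)=\{P_0,\dots,P_{q^2+q}\}$. Let $\tau:P_i\mapsto P_{ip\bmod(q^2+q+1)}$ (a collineation) and let $\ell_0$ be a line of $PG(2,q)$ fixed by $\tau$. Let $t$ be a positive divisor of $q^2+q+1$ and for $i=0,\dots,t-1$ let $O_i=\{P_u:u\equiv i\pmod t\}$. For $u=0,\dots,t-1$ let $w_u=|\ell_0\cap O_u|$. Let $s(p,t)$ be the number of orbits on $\mathbb{Z}_t\setminus\{0\}$ of the group generated by $i\mapsto p\cdot i\pmod t$. *)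

theory Defs
  imports Complex_Main "HOL-Computational_Algebra.Primes"
begin

text \<open>Model of F_{q^3}: a finite field type 'a with CARD('a) = q^3.
  The subfield F_q is {c. c^q = c}.\<close>

definition Fq :: "nat \<Rightarrow> 'a::{field,finite} set" where
  "Fq q = {c. c ^ q = c}"

definition primitive_elem :: "'a::{field,finite} \<Rightarrow> bool" where
  "primitive_elem \<alpha> \<longleftrightarrow> (\<forall>x. x \<noteq> 0 \<longrightarrow> (\<exists>i::nat. x = \<alpha> ^ i))"

text \<open>The point P_i: the 1-dimensional F_q-subspace spanned by alpha^i.\<close>
definition pg_point :: "nat \<Rightarrow> 'a::{field,finite} \<Rightarrow> nat \<Rightarrow> 'a set" where
  "pg_point q \<alpha> i = {c * \<alpha> ^ i | c. c \<in> Fq q}"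

definition Fq_subspace :: "nat \<Rightarrow> 'a::{field,finite} set \<Rightarrow> bool" where
  "Fq_subspace q L \<longleftrightarrow> 0 \<in> L \<and> (\<forall>x\<in>L. \<forall>y\<in>L. x + y \<in> L)
     \<and> (\<forall>c\<in>Fq q. \<forall>x\<in>L. c * x \<in> L)"

text \<open>A line of PG(2,q): a 2-dimensional F_q-subspace of F_{q^3} (q^2 elements).\<close>
definition pg_line :: "nat \<Rightarrow> 'a::{field,finite} set \<Rightarrow> bool" where
  "pg_line q L \<longleftrightarrow> Fq_subspace q L \<and> card L = q ^ 2"

definition line_points :: "nat \<Rightarrow> 'a::{field,finite} \<Rightarrow> 'a set \<Rightarrow> 'a set set" where
  "line_points q \<alpha> L = {pg_point q \<alpha> i | i. i < q^2 + q + 1 \<and> pg_point q \<alpha> i \<subseteq> L}"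

definition orbit_O :: "nat \<Rightarrow> 'a::{field,finite} \<Rightarrow> nat \<Rightarrow> nat \<Rightarrow> 'a set set" where
  "orbit_O q \<alpha> t u = {pg_point q \<alpha> i | i. i < q^2 + q + 1 \<and> i mod t = u}"

text \<open>tau fixes L: tau(P_i) = P_{ip mod (q^2+q+1)} lies on L iff P_i does.\<close>
definition tau_fixed :: "nat \<Rightarrow> nat \<Rightarrow> 'a::{field,finite} \<Rightarrow> 'a set \<Rightarrow> bool" where
  "tau_fixed p q \<alpha> L \<longleftrightarrow> (\<forall>i < q^2 + q + 1.
     pg_point q \<alpha> i \<subseteq> L \<longleftrightarrow> pg_point q \<alpha> ((i * p) mod (q^2 + q + 1)) \<subseteq> L)"

definition mult_orbit :: "nat \<Rightarrow> nat \<Rightarrow> nat \<Rightarrow> nat set" where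
  "mult_orbit p t i = {(p ^ k * i) mod t | k. True}"

definition s_pt :: "nat \<Rightarrow> nat \<Rightarrow> nat" where
  "s_pt p t = card (mult_orbit p t ` {1..<t})"

end

theory Submission
  imports Defs "HOL-Number_Theory.Number_Theory"
begin

text \<open>
  Let \<open>m = q\<^sup>3 - 1\<close> and \<open>n = q\<^sup>2 + q + 1\<close>. Since \<open>F\<^sub>q\<^sup>* = \<langle>\<alpha>\<^sup>n\<rangle>\<close>, the point \<open>P\<^sub>i\<close> lies on
  \<open>L\<close> iff \<open>i mod n\<close> lies in \<open>D = {i < n. \<alpha>\<^sup>i \<in> L}\<close>, and \<open>w\<^sub>u\<close> counts the elements of \<open>D\<close>
  congruent to \<open>u\<close> modulo \<open>t\<close>; so \<open>\<Sum> w\<^sub>u = |D| = q + 1\<close>. For every \<open>d\<close> the subspace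
  \<open>L \<inter> \<alpha>\<^sup>-\<^sup>dL\<close> has at least \<open>q\<close> elements, by the product formula for subgroups. Summing over
  \<open>d\<close> and comparing with \<open>|L - {0}|\<^sup>2\<close> shows that the bound is attained whenever \<open>n\<close> does
  not divide \<open>d\<close>: \<open>D\<close> is a planar difference set modulo \<open>n\<close>. Counting pairs of \<open>D\<close> that are
  congruent modulo \<open>t\<close> then gives \<open>\<Sum> w\<^sub>u\<^sup>2 = q + n / t\<close>. Finally \<open>\<tau>\<close> maps the points of
  \<open>O\<^sub>u\<close> on \<open>L\<close> injectively to those of \<open>O\<^sub>p\<^sub>u\<close>, so \<open>w\<close> is constant on the orbits of
  multiplication by \<open>p\<close> on the nonzero residues modulo the prime \<open>t\<close>. These orbits all have
  \<open>(t - 1) / s(p,t)\<close> elements, which turns the sums over all \<open>u \<noteq> 0\<close> into the weighted sums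
  over the representatives.
\<close>

lemma finite_add_closed_imp_uminus_closed:
  fixes L :: "'a::ab_group_add set"
  assumes "finite L" "0 \<in> L" "\<And>x y. x \<in> L \<Longrightarrow> y \<in> L \<Longrightarrow> x + y \<in> L" "x \<in> L"
  shows "- x \<in> L"
proof -
  have "(\<lambda>y. x + y) ` L = L"
    using assms by (intro endo_inj_surj) (auto simp: inj_on_def)
  then obtain y where "y \<in> L" "x + y = 0"
    using assms(2) by (metis imageE)
  then show ?thesis
    by (metis add.commute add_eq_0_iff2)
qed

lemma card_mult_card_le_card_Int_mult_card_UNIV:
  fixes L M :: "'a::{ab_group_add,finite} set"
  assumes L: "\<And>x y. x \<in> L \<Longrightarrow> y \<in> L \<Longrightarrow> x - y \<in> L"
    and M: "\<And>x y. x \<in> M \<Longrightarrow> y \<in> M \<Longrightarrow> x - y \<in> M"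
  shows "card L * card M \<le> card (L \<inter> M) * card (UNIV :: 'a set)"
proof -
  define F where "F s = {(a, b). a \<in> L \<and> b \<in> M \<and> a + b = s}" for s
  have fibre: "card (F s) \<le> card (L \<inter> M)" for s
  proof (cases "F s = {}")
    case False
    then obtain a0 b0 where ab0: "(a0, b0) \<in> F s" by auto
    have "inj_on (\<lambda>(a, b). a - a0) (F s)"
      by (auto simp: inj_on_def F_def)
    moreover have "a - a0 \<in> L \<inter> M" if "(a, b) \<in> F s" for a b
    proof -
      have "a - a0 \<in> L"
        using that ab0 L by (auto simp: F_def)
      moreover have "b0 - b \<in> M"
        using that ab0 M by (auto simp: F_def)
      moreover have "a - a0 = b0 - b"
        using that ab0 by (auto simp: F_def algebra_simps)
      ultimately show ?thesis by simp
    qed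
    then have "(\<lambda>(a, b). a - a0) ` F s \<subseteq> L \<inter> M"
      by auto
    ultimately show ?thesis by (metis card_image card_mono finite)
  qed simp
  have "L \<times> M = (\<Union>s. F s)"
    by (auto simp: F_def)
  then have "card L * card M = card (\<Union>s. F s)"
    by (metis card_cartesian_product)
  also have "\<dots> \<le> (\<Sum>s\<in>UNIV. card (F s))"
    by (rule card_UN_le) simp
  also have "\<dots> \<le> (\<Sum>s\<in>(UNIV::'a set). card (L \<inter> M))"
    by (rule sum_mono) (rule fibre)
  also have "\<dots> = card (L \<inter> M) * card (UNIV :: 'a set)"
    by simp
  finally show ?thesis .
qed

lemma finite_field_power_card_minus_one:
  fixes x :: "'a::{field,finite}"
  assumes "x \<noteq> 0"
  shows "x ^ (card (UNIV :: 'a set) - 1) = 1"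
proof -
  let ?U = "UNIV - {0::'a}"
  have "(\<Prod>y\<in>?U. x * y) = (\<Prod>y\<in>?U. y)"
    by (rule prod.reindex_bij_witness[of _ "\<lambda>y. y / x" "\<lambda>y. x * y"]) (use assms in auto)
  then have "x ^ card ?U * \<Prod>?U = 1 * \<Prod>?U"
    by (simp add: prod.distrib)
  then show ?thesis
    by (simp add: card_Diff_singleton)
qed

lemma card_dvd_less_mult:
  assumes "k > 0"
  shows "card {d. d < c * k \<and> k dvd d} = c"
proof -
  have "{d. d < c * k \<and> k dvd d} = (\<lambda>j. k * j) ` {..<c}"
    using assms by (auto elim!: dvdE simp: mult.commute)
  moreover have "inj_on (\<lambda>j. k * j) {..<c}" using assms by (auto simp: inj_on_def)
  ultimately show ?thesis by (simp add: card_image)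
qed

lemma card_mod_preimage_less_mult:
  assumes "A \<subseteq> {..<n}"
  shows "card {k. k < c * n \<and> k mod n \<in> A} = c * card A"
proof -
  have "bij_betw (\<lambda>(a, j). j * n + a) (A \<times> {..<c}) {k. k < c * n \<and> k mod n \<in> A}"
  proof (rule bij_betw_byWitness[where f' = "\<lambda>k. (k mod n, k div n)"])
    show "\<forall>x\<in>A \<times> {..<c}. (\<lambda>k. (k mod n, k div n)) ((\<lambda>(a, j). j * n + a) x) = x"
      using assms by auto
    show "\<forall>k\<in>{k. k < c * n \<and> k mod n \<in> A}. (\<lambda>(a, j). j * n + a) (k mod n, k div n) = k"
      by simp
    show "(\<lambda>(a, j). j * n + a) ` (A \<times> {..<c}) \<subseteq> {k. k < c * n \<and> k mod n \<in> A}"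
    proof clarify
      fix a j assume "a \<in> A" "j < c"
      moreover have "a < n" using \<open>a \<in> A\<close> assms by auto
      moreover have "Suc j * n \<le> c * n" using \<open>j < c\<close> by (intro mult_le_mono1) simp
      ultimately show "j * n + a < c * n \<and> (j * n + a) mod n \<in> A" by simp
    qed
    show "(\<lambda>k. (k mod n, k div n)) ` {k. k < c * n \<and> k mod n \<in> A} \<subseteq> A \<times> {..<c}"
    proof clarify
      fix k assume "k < c * n" "k mod n \<in> A"
      then have "n > 0" using assms by (metis gr_zeroI lessThan_iff mod_by_0 not_less0 subsetD)
      then show "k div n < c" using \<open>k < c * n\<close> by (simp add: div_less_iff_less_mult)
    qed
  qed
  moreover have "finite A" using assms finite_subset by blast
  ultimately show ?thesis
    by (simp add: bij_betw_same_card[symmetric] card_cartesian_product)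
qed

lemma mod_eq_iff_dvd_mod_diff:
  fixes t m x y :: nat
  assumes "t dvd m" "y < m"
  shows "x mod t = y mod t \<longleftrightarrow> t dvd (x + m - y) mod m"
proof -
  have "t dvd (x + m - y) mod m \<longleftrightarrow> t dvd x + m - y"
    using assms(1) by (metis dvd_mod_iff)
  also have "\<dots> \<longleftrightarrow> (x + m) mod t = y mod t"
    using assms(2) by (intro mod_eq_dvd_iff_nat[symmetric]) simp
  also have "(x + m) mod t = x mod t"
    using assms(1) by (auto elim!: dvdE)
  finally show ?thesis by simp
qed

lemma sum_card_shift_eq_card_pairs:
  fixes E S :: "nat set"
  assumes E: "E \<subseteq> {..<m}" and S: "S \<subseteq> {..<m}"
  shows "(\<Sum>d\<in>S. card {y\<in>E. (y + d) mod m \<in> E})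
       = card {(x, y). x \<in> E \<and> y \<in> E \<and> (x + m - y) mod m \<in> S}"
proof -
  have diff_of_shift: "((y + d) mod m + m - y) mod m = d" if "d < m" "y < m" for d y
  proof -
    have "((y + d) mod m + m - y) mod m = ((y + d) mod m + (m - y)) mod m"
      using that by simp
    also have "\<dots> = (y + d + (m - y)) mod m"
      by (rule mod_add_left_eq)
    also have "y + d + (m - y) = d + m"
      using that by simp
    finally show ?thesis
      using that by simp
  qed
  have shift_by_diff: "(y + (x + m - y) mod m) mod m = x" if "x < m" "y < m" for x y
    using that by (simp add: mod_add_right_eq)
  have "bij_betw (\<lambda>(d, y). ((y + d) mod m, y)) (SIGMA d:S. {y\<in>E. (y + d) mod m \<in> E})
          {(x, y). x \<in> E \<and> y \<in> E \<and> (x + m - y) mod m \<in> S}"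
  proof (rule bij_betw_byWitness[where f' = "\<lambda>(x, y). ((x + m - y) mod m, y)"])
    show "\<forall>a\<in>SIGMA d:S. {y\<in>E. (y + d) mod m \<in> E}.
        (\<lambda>(x, y). ((x + m - y) mod m, y)) ((\<lambda>(d, y). ((y + d) mod m, y)) a) = a"
      using E S by (auto simp: diff_of_shift subset_iff)
    show "\<forall>a\<in>{(x, y). x \<in> E \<and> y \<in> E \<and> (x + m - y) mod m \<in> S}.
        (\<lambda>(d, y). ((y + d) mod m, y)) ((\<lambda>(x, y). ((x + m - y) mod m, y)) a) = a"
      using E by (auto simp: shift_by_diff subset_iff)
    show "(\<lambda>(d, y). ((y + d) mod m, y)) ` (SIGMA d:S. {y\<in>E. (y + d) mod m \<in> E})
        \<subseteq> {(x, y). x \<in> E \<and> y \<in> E \<and> (x + m - y) mod m \<in> S}"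
      using E S by (auto simp: diff_of_shift subset_iff)
    show "(\<lambda>(x, y). ((x + m - y) mod m, y)) ` {(x, y). x \<in> E \<and> y \<in> E \<and> (x + m - y) mod m \<in> S}
        \<subseteq> (SIGMA d:S. {y\<in>E. (y + d) mod m \<in> E})"
      using E by (auto simp: shift_by_diff subset_iff)
  qed
  then have "card (SIGMA d:S. {y\<in>E. (y + d) mod m \<in> E})
      = card {(x, y). x \<in> E \<and> y \<in> E \<and> (x + m - y) mod m \<in> S}"
    by (rule bij_betw_same_card)
  moreover have "finite E" "finite S" using finite_subset E S by auto
  ultimately show ?thesis
    by (simp add: card_SigmaI)
qed

lemma card_pairs_same_image:
  fixes f :: "'b \<Rightarrow> 'c"
  assumes "finite E" "finite U" "f ` E \<subseteq> U"
  shows "card {(x, y). x \<in> E \<and> y \<in> E \<and> f x = f y} = (\<Sum>u\<in>U. card {x\<in>E. f x = u} ^ 2)"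
proof -
  have "{(x, y). x \<in> E \<and> y \<in> E \<and> f x = f y} = (\<Union>u\<in>U. {x\<in>E. f x = u} \<times> {x\<in>E. f x = u})"
    using assms(3) by auto
  moreover have "card \<dots> = (\<Sum>u\<in>U. card ({x\<in>E. f x = u} \<times> {x\<in>E. f x = u}))"
    by (rule card_UN_disjoint) (use assms in auto)
  ultimately show ?thesis by (simp add: card_cartesian_product power2_eq_square)
qed

lemma bij_betw_mult_mod:
  fixes p t :: nat
  assumes "coprime p t"
  shows "bij_betw (\<lambda>u. (p * u) mod t) {..<t} {..<t}"
proof -
  have "inj_on (\<lambda>u. (p * u) mod t) {..<t}"
  proof (rule inj_onI)
    fix u v assume "u \<in> {..<t}" "v \<in> {..<t}" "(p * u) mod t = (p * v) mod t"
    then show "u = v"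
      using assms cong_mult_lcancel_nat[of p t u v] by (simp add: cong_def)
  qed
  moreover have "(\<lambda>u. (p * u) mod t) ` {..<t} \<subseteq> {..<t}"
    by auto
  ultimately show ?thesis
    by (simp add: bij_betw_def endo_inj_surj)
qed

lemma eq_comp_if_le_comp_permutation:
  fixes f :: "'a \<Rightarrow> 'b::ordered_cancel_comm_monoid_add"
  assumes "finite A" "bij_betw \<sigma> A A" "\<And>x. x \<in> A \<Longrightarrow> f x \<le> f (\<sigma> x)" "x \<in> A"
  shows "f (\<sigma> x) = f x"
proof -
  have "sum f A = sum (f \<circ> \<sigma>) A"
    using sum.reindex_bij_betw[OF assms(2), of f] by simp
  then have "f x = (f \<circ> \<sigma>) x"
    by (rule sum_mono_inv) (use assms in auto)
  then show ?thesis by simp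
qed

section \<open>Orbits of multiplication modulo \<open>t\<close>\<close>

lemma mem_mult_orbit_iff: "x \<in> mult_orbit p t i \<longleftrightarrow> (\<exists>k. x = (p ^ k * i) mod t)"
  by (auto simp: mult_orbit_def)

lemma mult_orbit_eq_range: "mult_orbit p t i = range (\<lambda>k. (p ^ k * i) mod t)"
  by (auto simp: mult_orbit_def)

lemma self_mem_mult_orbit: "i < t \<Longrightarrow> i \<in> mult_orbit p t i"
  using mem_mult_orbit_iff[of i p t i] by (metis mod_less mult_1 power_0)

lemma mult_orbit_subset_lessThan: "t > 0 \<Longrightarrow> mult_orbit p t i \<subseteq> {..<t}"
  by (auto simp: mem_mult_orbit_iff)

lemma finite_mult_orbit: "t > 0 \<Longrightarrow> finite (mult_orbit p t i)"
  by (rule finite_subset[OF mult_orbit_subset_lessThan]) simp_all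

lemma mult_orbit_mono:
  assumes "x \<in> mult_orbit p t i"
  shows "mult_orbit p t x \<subseteq> mult_orbit p t i"
proof
  fix y assume "y \<in> mult_orbit p t x"
  then obtain j k where "y = (p ^ j * x) mod t" "x = (p ^ k * i) mod t"
    using assms by (auto simp: mem_mult_orbit_iff)
  then have "y = (p ^ (j + k) * i) mod t"
    by (simp add: mod_mult_right_eq power_add mult.assoc)
  then show "y \<in> mult_orbit p t i"
    by (auto simp: mem_mult_orbit_iff)
qed

lemma mult_orbit_sym:
  assumes "coprime p t" "i < t" "x \<in> mult_orbit p t i"
  shows "i \<in> mult_orbit p t x"
proof -
  obtain k where k: "x = (p ^ k * i) mod t"
    using assms(3) by (auto simp: mem_mult_orbit_iff)
  \<comment> \<open>By Euler's theorem, \<open>p ^ (k * (totient t - 1))\<close> inverts \<open>p ^ k\<close> modulo \<open>t\<close>.\<close>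
  have "[(p ^ totient t) ^ k = 1] (mod t)"
    using euler_theorem[of p t] assms(1) cong_pow by (metis coprime_commute power_one)
  moreover have "k * (totient t - 1) + k = totient t * k"
    using assms(2) by (cases "totient t") (auto simp: algebra_simps)
  ultimately have "[p ^ (k * (totient t - 1)) * p ^ k * i = i] (mod t)"
    using cong_scalar_right[of _ 1 t i] by (metis mult_1 power_add power_mult)
  then have "i = (p ^ (k * (totient t - 1)) * x) mod t"
    using assms(2) by (simp add: k cong_def mod_mult_right_eq mult.assoc)
  then show ?thesis
    by (auto simp: mem_mult_orbit_iff)
qed

lemma mult_orbit_eq:
  assumes "coprime p t" "i < t" "x \<in> mult_orbit p t i"
  shows "mult_orbit p t x = mult_orbit p t i"
  using assms mult_orbit_mono mult_orbit_sym by (metis subset_antisym)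

lemma card_mult_orbit:
  assumes "coprime i t"
  shows "card (mult_orbit p t i) = card (mult_orbit p t 1)"
proof -
  have "bij_betw (\<lambda>x. (x * i) mod t) (mult_orbit p t 1) (mult_orbit p t i)"
  proof (rule bij_betw_imageI)
    show "inj_on (\<lambda>x. (x * i) mod t) (mult_orbit p t 1)"
    proof (rule inj_onI)
      fix x y assume "x \<in> mult_orbit p t 1" "y \<in> mult_orbit p t 1" "(x * i) mod t = (y * i) mod t"
      then show "x = y"
        using assms cong_mult_rcancel_nat[of i t x y] by (auto simp: cong_def mem_mult_orbit_iff)
    qed
    show "(\<lambda>x. (x * i) mod t) ` mult_orbit p t 1 = mult_orbit p t i"
      by (simp add: mult_orbit_eq_range image_image mod_mult_left_eq)
  qed
  then show ?thesis
    by (metis bij_betw_same_card)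
qed

lemma mult_orbit_invariant:
  assumes "\<And>u. u < t \<Longrightarrow> f ((p * u) mod t) = f u" "i < t" "x \<in> mult_orbit p t i"
  shows "f x = f i"
proof -
  have "f ((p ^ k * i) mod t) = f i" for k
  proof (induction k)
    case (Suc k)
    have "(p ^ Suc k * i) mod t = (p * ((p ^ k * i) mod t)) mod t"
      by (simp add: mod_mult_right_eq mult.assoc)
    then show ?case
      using Suc assms(1,2) by simp
  qed (use assms(2) in simp)
  then show ?thesis
    using assms(3) by (auto simp: mem_mult_orbit_iff)
qed

lemma coprime_if_less_prime:
  fixes i t :: nat
  assumes "prime t" "0 < i" "i < t"
  shows "coprime i t"
proof -
  have "\<not> t dvd i"
    using assms(2,3) by (rule nat_dvd_not_less)
  then show ?thesis
    using prime_imp_coprime[OF assms(1)] by (simp add: coprime_commute)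
qed

context
  fixes p t :: nat
  assumes prime_t: "prime t" and not_dvd: "\<not> t dvd p"
begin

lemma coprime_multiplier: "coprime p t"
  using prime_imp_coprime[OF prime_t not_dvd] by (simp add: coprime_commute)

lemma mult_orbit_subset_units:
  assumes "i \<in> {1..<t}"
  shows "mult_orbit p t i \<subseteq> {1..<t}"
proof
  fix x assume "x \<in> mult_orbit p t i"
  then obtain k where k: "x = (p ^ k * i) mod t"
    by (auto simp: mem_mult_orbit_iff)
  have "\<not> t dvd i"
    using assms by (auto dest: dvd_imp_le)
  moreover have "\<not> t dvd p ^ k"
    using prime_t not_dvd prime_dvd_power by blast
  ultimately have "\<not> t dvd p ^ k * i"
    using prime_t by (simp add: prime_dvd_mult_iff)
  then show "x \<in> {1..<t}"
    using k prime_gt_0_nat[OF prime_t] by (auto simp: dvd_eq_mod_eq_0)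
qed

lemma mult_orbit_eq_of_mem_units:
  assumes "i \<in> {1..<t}" "x \<in> mult_orbit p t i"
  shows "mult_orbit p t x = mult_orbit p t i"
  using assms coprime_multiplier by (intro mult_orbit_eq) auto

context
  fixes R :: "nat set"
  assumes R_subset: "R \<subseteq> {1..<t}"
    and R_transversal: "\<And>i. i \<in> {1..<t} \<Longrightarrow> card (R \<inter> mult_orbit p t i) = 1"
begin

lemma transversal_obtain:
  assumes "i \<in> {1..<t}"
  obtains r where "R \<inter> mult_orbit p t i = {r}"
  using R_transversal[OF assms] by (auto simp: card_1_singleton_iff)

lemma bij_betw_transversal_mult_orbits:
  "bij_betw (mult_orbit p t) R (mult_orbit p t ` {1..<t})"
proof (rule bij_betw_imageI)
  show "inj_on (mult_orbit p t) R"
  proof (rule inj_onI)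
    fix r r' assume r: "r \<in> R" "r' \<in> R" "mult_orbit p t r = mult_orbit p t r'"
    moreover have r_units: "r \<in> {1..<t}" "r' < t"
      using r R_subset by auto
    ultimately have "r \<in> R \<inter> mult_orbit p t r" "r' \<in> R \<inter> mult_orbit p t r"
      using self_mem_mult_orbit by auto
    moreover obtain z where "R \<inter> mult_orbit p t r = {z}"
      using transversal_obtain[OF r_units(1)] .
    ultimately show "r = r'"
      by auto
  qed
  show "mult_orbit p t ` R = mult_orbit p t ` {1..<t}"
  proof
    show "mult_orbit p t ` {1..<t} \<subseteq> mult_orbit p t ` R"
    proof clarify
      fix i assume i: "i \<in> {1..<t}"
      then obtain r where "R \<inter> mult_orbit p t i = {r}"
        by (rule transversal_obtain)
      then have "r \<in> R" "r \<in> mult_orbit p t i"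
        by auto
      have "mult_orbit p t i = mult_orbit p t r"
        using mult_orbit_eq_of_mem_units[OF i \<open>r \<in> mult_orbit p t i\<close>] by simp
      then show "mult_orbit p t i \<in> mult_orbit p t ` R"
        using \<open>r \<in> R\<close> by (rule image_eqI)
    qed
  qed (use R_subset in auto)
qed

lemma s_pt_eq_card_transversal: "s_pt p t = card R"
  unfolding s_pt_def using bij_betw_transversal_mult_orbits by (rule bij_betw_same_card[symmetric])

lemma sum_units_eq_sum_transversal_mult_orbits:
  "(\<Sum>u\<in>{1..<t}. f u) = (\<Sum>r\<in>R. \<Sum>u\<in>mult_orbit p t r. f u)"
proof -
  have "\<Union>(mult_orbit p t ` {1..<t}) = {1..<t}"
  proof
    show "\<Union>(mult_orbit p t ` {1..<t}) \<subseteq> {1..<t}"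
      using mult_orbit_subset_units by blast
    show "{1..<t} \<subseteq> \<Union>(mult_orbit p t ` {1..<t})"
    proof
      fix i assume "i \<in> {1..<t}"
      then show "i \<in> \<Union>(mult_orbit p t ` {1..<t})"
        using self_mem_mult_orbit[of i t p] by auto
    qed
  qed
  moreover have "A \<inter> B = {}"
    if A: "A \<in> mult_orbit p t ` {1..<t}" and B: "B \<in> mult_orbit p t ` {1..<t}"
      and "A \<noteq> B" for A B
  proof (rule ccontr)
    assume "A \<inter> B \<noteq> {}"
    then obtain y where y: "y \<in> A" "y \<in> B"
      by blast
    obtain a b where a: "a \<in> {1..<t}" "A = mult_orbit p t a" and b: "b \<in> {1..<t}" "B = mult_orbit p t b"
      using A B by blast
    have "mult_orbit p t y = A"
      using mult_orbit_eq_of_mem_units[OF a(1), of y] a(2) y(1) by simp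
    moreover have "mult_orbit p t y = B"
      using mult_orbit_eq_of_mem_units[OF b(1), of y] b(2) y(2) by simp
    ultimately show False
      using \<open>A \<noteq> B\<close> by simp
  qed
  moreover have "finite A" if "A \<in> mult_orbit p t ` {1..<t}" for A
    using that finite_mult_orbit prime_gt_0_nat[OF prime_t] by auto
  ultimately have "(\<Sum>u\<in>{1..<t}. f u) = (\<Sum>A\<in>mult_orbit p t ` {1..<t}. \<Sum>u\<in>A. f u)"
    using sum.Union_disjoint[of "mult_orbit p t ` {1..<t}" f] by simp
  also have "\<dots> = (\<Sum>r\<in>R. \<Sum>u\<in>mult_orbit p t r. f u)"
    by (rule sum.reindex_bij_betw[OF bij_betw_transversal_mult_orbits, symmetric])
  finally show ?thesis .
qed

theorem sum_units_eq_sum_transversal: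
  fixes f :: "nat \<Rightarrow> real"
  assumes f_invariant: "\<And>u. u < t \<Longrightarrow> f ((p * u) mod t) = f u"
  shows "real (t - 1) / real (s_pt p t) * (\<Sum>r\<in>R. f r) = (\<Sum>u\<in>{1..<t}. f u)"
proof -
  define c where "c = card (mult_orbit p t 1)"
  have card_orbit: "card (mult_orbit p t r) = c" if "r \<in> R" for r
  proof -
    have "r \<in> {1..<t}"
      using that R_subset by auto
    then show ?thesis
      unfolding c_def using prime_t by (intro card_mult_orbit coprime_if_less_prime) auto
  qed
  have orbit_sum: "(\<Sum>u\<in>mult_orbit p t r. g u) = real c * g r"
    if "r \<in> R" and g_invariant: "\<And>u. u < t \<Longrightarrow> g ((p * u) mod t) = g u" for r g
  proof -
    have "r < t"
      using that R_subset by auto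
    then have "(\<Sum>u\<in>mult_orbit p t r. g u) = (\<Sum>u\<in>mult_orbit p t r. g r)"
      using mult_orbit_invariant[where f = g, OF g_invariant] by (intro sum.cong) auto
    then show ?thesis
      using card_orbit[OF \<open>r \<in> R\<close>] by simp
  qed
  have sums: "(\<Sum>u\<in>{1..<t}. g u) = real c * (\<Sum>r\<in>R. g r)"
    if "\<And>u. u < t \<Longrightarrow> g ((p * u) mod t) = g u" for g :: "nat \<Rightarrow> real"
    unfolding sum_units_eq_sum_transversal_mult_orbits sum_distrib_left
    using orbit_sum[where g = g, OF _ that] by simp
  have "real (t - 1) = real c * real (card R)"
    using sums[of "\<lambda>_. 1"] by simp
  moreover have "t - 1 \<noteq> 0"
    using prime_gt_1_nat[OF prime_t] by simp
  ultimately have "card R \<noteq> 0"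
    by (intro notI) simp
  with \<open>real (t - 1) = real c * real (card R)\<close> show ?thesis
    using sums[where g = f, OF f_invariant] s_pt_eq_card_transversal by simp
qed

end

end

section \<open>Lines of \<open>PG(2, q)\<close> under a Singer cycle\<close>

lemma prime_not_dvd_square_add_add_one:
  fixes p q :: nat
  assumes "prime p" "p dvd q"
  shows "\<not> p dvd q ^ 2 + q + 1"
proof -
  have "p dvd q ^ 2 + q"
    using assms(2) by (simp add: power2_eq_square)
  then show ?thesis
    using prime_ge_2_nat[OF assms(1)] dvd_add_right_iff[of p "q ^ 2 + q" 1] by simp
qed

lemma inverse_mem_Fq: "c \<in> Fq q \<Longrightarrow> inverse c \<in> Fq q"
  by (simp add: Fq_def power_inverse)

locale singer_cycle =
  fixes \<alpha> :: "'a::{field,finite}" and q :: nat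
  assumes q_ge_2: "q \<ge> 2" and card_UNIV: "card (UNIV :: 'a set) = q ^ 3"
    and primitive: "primitive_elem \<alpha>"
begin

definition m :: nat where "m = q ^ 3 - 1"
definition n :: nat where "n = q ^ 2 + q + 1"

lemma m_eq: "m = (q - 1) * n"
proof -
  obtain k where "q = Suc k"
    using q_ge_2 by (cases q) auto
  then show ?thesis
    unfolding m_def n_def by (simp add: power2_eq_square power3_eq_cube algebra_simps)
qed

lemma n_pos: "n > 0"
  by (simp add: n_def)

lemma m_pos: "m > 0"
  using q_ge_2 n_pos unfolding m_eq by simp

lemma n_dvd_m: "n dvd m"
  unfolding m_eq by simp

lemma alpha_nonzero: "\<alpha> \<noteq> 0"
proof
  assume "\<alpha> = 0"
  have "x \<in> {0, 1}" for x :: 'a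
  proof (cases "x = 0")
    case False
    then obtain i where "x = \<alpha> ^ i"
      using primitive unfolding primitive_elem_def by blast
    then show ?thesis
      using \<open>\<alpha> = 0\<close> by (cases i) simp_all
  qed simp
  then have "UNIV = {0, 1 :: 'a}"
    by blast
  then have "card (UNIV :: 'a set) = card {0, 1 :: 'a}"
    by (simp only:)
  also have "\<dots> = 2"
    by simp
  finally have "card (UNIV :: 'a set) = 2" .
  moreover have "q ^ 3 \<ge> 2 ^ 3"
    using q_ge_2 by (intro power_mono) auto
  ultimately show False
    using card_UNIV by simp
qed

lemma alpha_power_m: "\<alpha> ^ m = 1"
  using finite_field_power_card_minus_one[OF alpha_nonzero] card_UNIV by (simp add: m_def)

lemma alpha_power_mod: "\<alpha> ^ (a mod m) = \<alpha> ^ a"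
proof -
  have "\<alpha> ^ a = \<alpha> ^ (m * (a div m) + a mod m)"
    by simp
  also have "\<dots> = \<alpha> ^ (a mod m)"
    by (simp only: power_add power_mult alpha_power_m power_one mult_1)
  finally show ?thesis ..
qed

lemma alpha_power_surj:
  assumes "x \<noteq> 0"
  obtains k where "k < m" "\<alpha> ^ k = x"
proof -
  obtain i where "x = \<alpha> ^ i"
    using assms primitive unfolding primitive_elem_def by blast
  then show ?thesis
    using that[of "i mod m"] m_pos alpha_power_mod by simp
qed

lemma inj_on_alpha_power: "inj_on (\<lambda>k. \<alpha> ^ k) {..<m}"
proof (rule eq_card_imp_inj_on)
  have "(\<lambda>k. \<alpha> ^ k) ` {..<m} = UNIV - {0}"
  proof
    show "UNIV - {0} \<subseteq> (\<lambda>k. \<alpha> ^ k) ` {..<m}"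
    proof
      fix x :: 'a assume "x \<in> UNIV - {0}"
      then obtain k where "k < m" "\<alpha> ^ k = x"
        using alpha_power_surj by blast
      then show "x \<in> (\<lambda>k. \<alpha> ^ k) ` {..<m}"
        by blast
    qed
  qed (use alpha_nonzero in auto)
  then show "card ((\<lambda>k. \<alpha> ^ k) ` {..<m}) = card {..<m}"
    using card_UNIV by (simp add: card_Diff_singleton m_def)
qed simp

lemma alpha_power_eq_iff: "\<alpha> ^ a = \<alpha> ^ b \<longleftrightarrow> a mod m = b mod m"
proof
  assume "\<alpha> ^ a = \<alpha> ^ b"
  then have "\<alpha> ^ (a mod m) = \<alpha> ^ (b mod m)"
    by (simp add: alpha_power_mod)
  then show "a mod m = b mod m"
    using inj_on_alpha_power m_pos by (simp add: inj_on_def)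
next
  assume "a mod m = b mod m"
  then show "\<alpha> ^ a = \<alpha> ^ b"
    by (metis alpha_power_mod)
qed

lemma card_alpha_exponents: "card {k. k < m \<and> \<alpha> ^ k \<in> S} = card (S - {0})"
proof (rule bij_betw_same_card[OF bij_betw_imageI])
  show "inj_on (\<lambda>k. \<alpha> ^ k) {k. k < m \<and> \<alpha> ^ k \<in> S}"
    using inj_on_alpha_power by (rule inj_on_subset) auto
  show "(\<lambda>k. \<alpha> ^ k) ` {k. k < m \<and> \<alpha> ^ k \<in> S} = S - {0}"
  proof
    show "S - {0} \<subseteq> (\<lambda>k. \<alpha> ^ k) ` {k. k < m \<and> \<alpha> ^ k \<in> S}"
    proof
      fix x assume "x \<in> S - {0}"
      then obtain k where "k < m" "\<alpha> ^ k = x"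
        using alpha_power_surj by blast
      with \<open>x \<in> S - {0}\<close> show "x \<in> (\<lambda>k. \<alpha> ^ k) ` {k. k < m \<and> \<alpha> ^ k \<in> S}"
        by blast
    qed
  qed (use alpha_nonzero in auto)
qed

lemma alpha_power_mem_Fq_iff: "\<alpha> ^ a \<in> Fq q \<longleftrightarrow> n dvd a"
proof -
  have "\<alpha> ^ a \<in> Fq q \<longleftrightarrow> \<alpha> ^ (a * q) = \<alpha> ^ a"
    by (simp add: Fq_def power_mult)
  also have "\<dots> \<longleftrightarrow> m dvd a * q - a"
    unfolding alpha_power_eq_iff using q_ge_2 by (intro mod_eq_dvd_iff_nat) simp
  also have "a * q - a = (q - 1) * a"
    by (simp add: diff_mult_distrib2 mult.commute)
  also have "m dvd (q - 1) * a \<longleftrightarrow> n dvd a"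
    using q_ge_2 n_pos unfolding m_eq by simp
  finally show ?thesis .
qed

lemma pg_point_eq_iff:
  assumes "i < n" "j < n"
  shows "pg_point q \<alpha> i = pg_point q \<alpha> j \<longleftrightarrow> i = j"
proof
  assume "pg_point q \<alpha> i = pg_point q \<alpha> j"
  moreover have "\<alpha> ^ i \<in> pg_point q \<alpha> i"
    unfolding pg_point_def Fq_def by force
  ultimately obtain c where c: "c \<in> Fq q" "\<alpha> ^ i = c * \<alpha> ^ j"
    unfolding pg_point_def by blast
  then have "c \<noteq> 0"
    using alpha_nonzero by auto
  then obtain k where k: "c = \<alpha> ^ k"
    using primitive unfolding primitive_elem_def by blast
  then have "n dvd k"
    using c(1) alpha_power_mem_Fq_iff by simp
  have "i mod m = (k + j) mod m"
    using c(2) k by (simp add: alpha_power_eq_iff[symmetric] power_add)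
  then have "i mod n = (k + j) mod n"
    using n_dvd_m by (metis mod_mod_cancel)
  also have "\<dots> = j mod n"
    using \<open>n dvd k\<close> by (auto elim!: dvdE)
  finally show "i = j"
    using assms by simp
qed simp

end

locale singer_line = singer_cycle \<alpha> q for \<alpha> :: "'a::{field,finite}" and q +
  fixes L :: "'a set"
  assumes line: "pg_line q L"
begin

lemma zero_mem_L: "0 \<in> L"
  using line by (simp add: pg_line_def Fq_subspace_def)

lemma add_mem_L: "x \<in> L \<Longrightarrow> y \<in> L \<Longrightarrow> x + y \<in> L"
  using line by (simp add: pg_line_def Fq_subspace_def)

lemma scale_mem_L: "c \<in> Fq q \<Longrightarrow> x \<in> L \<Longrightarrow> c * x \<in> L"
  using line by (simp add: pg_line_def Fq_subspace_def)

lemma card_L: "card L = q ^ 2"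
  using line by (simp add: pg_line_def)

lemma diff_mem_L:
  assumes "x \<in> L" "y \<in> L"
  shows "x - y \<in> L"
proof -
  have "- y \<in> L"
    using finite_add_closed_imp_uminus_closed[OF _ zero_mem_L add_mem_L assms(2)] by simp
  then show ?thesis
    using add_mem_L[OF assms(1) \<open>- y \<in> L\<close>] by simp
qed

lemma mult_mem_L_iff:
  assumes "c \<in> Fq q" "c \<noteq> 0"
  shows "c * x \<in> L \<longleftrightarrow> x \<in> L"
proof
  assume "c * x \<in> L"
  then have "inverse c * (c * x) \<in> L"
    using assms(1) inverse_mem_Fq scale_mem_L by blast
  then show "x \<in> L"
    using assms(2) by (simp add: field_simps)
qed (use assms scale_mem_L in blast)

lemma alpha_power_mem_L_iff: "\<alpha> ^ a \<in> L \<longleftrightarrow> \<alpha> ^ (a mod n) \<in> L"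
proof -
  have "\<alpha> ^ a = \<alpha> ^ (n * (a div n)) * \<alpha> ^ (a mod n)"
    by (simp flip: power_add)
  moreover have "\<alpha> ^ (n * (a div n)) \<in> Fq q" "\<alpha> ^ (n * (a div n)) \<noteq> 0"
    using alpha_power_mem_Fq_iff alpha_nonzero by simp_all
  ultimately show ?thesis
    using mult_mem_L_iff by simp
qed

lemma pg_point_subset_L_iff: "pg_point q \<alpha> i \<subseteq> L \<longleftrightarrow> \<alpha> ^ i \<in> L"
proof
  assume "pg_point q \<alpha> i \<subseteq> L"
  moreover have "\<alpha> ^ i \<in> pg_point q \<alpha> i"
    unfolding pg_point_def Fq_def by force
  ultimately show "\<alpha> ^ i \<in> L"
    by blast
qed (auto simp: pg_point_def scale_mem_L)

definition D :: "nat set" where "D = {i. i < n \<and> \<alpha> ^ i \<in> L}"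
definition E :: "nat set" where "E = {k. k < m \<and> \<alpha> ^ k \<in> L}"

lemma D_subset: "D \<subseteq> {..<n}"
  by (auto simp: D_def)

lemma finite_D: "finite D"
  by (rule finite_subset[OF D_subset]) simp

lemma E_subset: "E \<subseteq> {..<m}"
  by (auto simp: E_def)

lemma E_eq: "E = {k. k < (q - 1) * n \<and> k mod n \<in> D}"
  using alpha_power_mem_L_iff n_pos by (auto simp: E_def D_def m_eq)

lemma card_E: "card E = (q - 1) * (q + 1)"
proof -
  have "card E = card (L - {0})"
    unfolding E_def by (rule card_alpha_exponents)
  also have "\<dots> = q ^ 2 - 1"
    using zero_mem_L card_L by (simp add: card_Diff_singleton)
  also have "\<dots> = (q - 1) * (q + 1)"
    by (simp add: power2_eq_square algebra_simps)
  finally show ?thesis .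
qed

lemma card_D: "card D = q + 1"
proof -
  have "(q - 1) * card D = (q - 1) * (q + 1)"
    using card_mod_preimage_less_mult[OF D_subset, of "q - 1"] card_E by (simp add: E_eq)
  moreover have "q - 1 \<noteq> 0"
    using q_ge_2 by simp
  ultimately show ?thesis
    using mult_left_cancel by blast
qed

lemma card_E_residue_class:
  assumes "t dvd n"
  shows "card {k \<in> E. k mod t = u} = (q - 1) * card {i \<in> D. i mod t = u}"
proof -
  have "{k \<in> E. k mod t = u} = {k. k < (q - 1) * n \<and> k mod n \<in> {i \<in> D. i mod t = u}}"
    unfolding E_eq using mod_mod_cancel[OF assms] by auto
  also have "card \<dots> = (q - 1) * card {i \<in> D. i mod t = u}"
    by (rule card_mod_preimage_less_mult) (use D_subset in auto)
  finally show ?thesis .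
qed

lemma q_le_card_L_Int_scaled:
  assumes "h \<noteq> 0"
  shows "q \<le> card (L \<inter> {x. h * x \<in> L})"
proof -
  let ?M = "{x. h * x \<in> L}"
  have "bij_betw ((*) h) ?M L"
    by (rule bij_betw_byWitness[where f' = "\<lambda>y. y / h"]) (use assms in auto)
  then have "card ?M = q ^ 2"
    using card_L by (simp add: bij_betw_same_card)
  moreover have "card L * card ?M \<le> card (L \<inter> ?M) * card (UNIV :: 'a set)"
    by (rule card_mult_card_le_card_Int_mult_card_UNIV) (auto simp: diff_mem_L right_diff_distrib)
  ultimately have "q * q ^ 3 \<le> card (L \<inter> ?M) * q ^ 3"
    using card_L card_UNIV by (simp add: power2_eq_square power3_eq_cube mult.assoc)
  then show ?thesis
    using q_ge_2 by simp
qed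

definition shift_overlap :: "nat \<Rightarrow> nat" where
  "shift_overlap d = card {y \<in> E. (y + d) mod m \<in> E}"

lemma shift_overlap_eq: "shift_overlap d = card (L \<inter> {x. \<alpha> ^ d * x \<in> L}) - 1"
proof -
  have "\<alpha> ^ ((y + d) mod m) = \<alpha> ^ d * \<alpha> ^ y" for y
    by (simp add: alpha_power_mod power_add mult.commute)
  then have "{y \<in> E. (y + d) mod m \<in> E} = {k. k < m \<and> \<alpha> ^ k \<in> L \<inter> {x. \<alpha> ^ d * x \<in> L}}"
    using m_pos by (auto simp: E_def)
  then have "shift_overlap d = card ((L \<inter> {x. \<alpha> ^ d * x \<in> L}) - {0})"
    unfolding shift_overlap_def by (simp only: card_alpha_exponents)
  then show ?thesis
    using zero_mem_L by (simp add: card_Diff_singleton)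
qed

lemma shift_overlap_ge: "q - 1 \<le> shift_overlap d"
  using q_le_card_L_Int_scaled[of "\<alpha> ^ d"] alpha_nonzero by (simp add: shift_overlap_eq)

lemma shift_overlap_multiple:
  assumes "n dvd d"
  shows "shift_overlap d = card E"
proof -
  have "L \<inter> {x. \<alpha> ^ d * x \<in> L} = L"
    using assms mult_mem_L_iff alpha_power_mem_Fq_iff alpha_nonzero by auto
  then show ?thesis
    using zero_mem_L by (simp add: shift_overlap_eq E_def card_alpha_exponents card_Diff_singleton)
qed

lemma sum_shift_overlap: "(\<Sum>d<m. shift_overlap d) = card E ^ 2"
proof -
  have "{(x, y). x \<in> E \<and> y \<in> E \<and> (x + m - y) mod m \<in> {..<m}} = E \<times> E"
    using m_pos by auto
  then show ?thesis
    using sum_card_shift_eq_card_pairs[OF E_subset, of "{..<m}"]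
    by (simp add: shift_overlap_def card_cartesian_product power2_eq_square)
qed

lemma sum_shift_overlap_multiples:
  "(\<Sum>d | d < m \<and> n dvd d. shift_overlap d) = (q - 1) * card E"
proof -
  have "card {d. d < m \<and> n dvd d} = q - 1"
    unfolding m_eq by (rule card_dvd_less_mult[OF n_pos])
  then show ?thesis
    using shift_overlap_multiple by simp
qed

lemma shift_overlap_nonmultiple:
  assumes "d < m" "\<not> n dvd d"
  shows "shift_overlap d = q - 1"
proof -
  \<comment> \<open>The lower bound \<open>q - 1\<close> is attained on average over the non-multiples
    of \<open>n\<close>, hence everywhere.\<close>
  define N where "N = {..<m} - {d. d < m \<and> n dvd d}"
  have "card {d. d < m \<and> n dvd d} = q - 1"
    unfolding m_eq by (rule card_dvd_less_mult[OF n_pos])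
  then have "card N = m - (q - 1)"
    unfolding N_def by (subst card_Diff_subset) auto
  then have "card N = (q - 1) * (n - 1)"
    by (simp add: m_eq diff_mult_distrib2)
  have "(\<Sum>d<m. shift_overlap d) = (\<Sum>d\<in>N. shift_overlap d) + (\<Sum>d | d < m \<and> n dvd d. shift_overlap d)"
    unfolding N_def by (rule sum.subset_diff) auto
  then have "(\<Sum>d\<in>N. shift_overlap d) + (q - 1) * card E = card E ^ 2"
    by (simp add: sum_shift_overlap sum_shift_overlap_multiples)
  moreover have "card N * (q - 1) + (q - 1) * card E = card E ^ 2"
  proof -
    obtain k where "q = Suc k"
      using q_ge_2 by (cases q) auto
    then show ?thesis
      unfolding \<open>card N = (q - 1) * (n - 1)\<close> card_E n_def by (simp add: algebra_simps power2_eq_square)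
  qed
  ultimately have "(\<Sum>d\<in>N. q - 1) = (\<Sum>d\<in>N. shift_overlap d)"
    by simp
  then have "q - 1 = shift_overlap d"
    by (rule sum_mono_inv) (use assms shift_overlap_ge in \<open>auto simp: N_def\<close>)
  then show ?thesis ..
qed

lemma card_E_pairs_congruent:
  assumes "t dvd n"
  shows "card {(x, y). x \<in> E \<and> y \<in> E \<and> x mod t = y mod t} = (q - 1) ^ 2 * (q + n div t)"
proof -
  define r where "r = n div t"
  have n_eq: "n = r * t"
    using assms by (simp add: r_def)
  then have "r \<ge> 1" "t > 0"
    using n_pos by (simp_all add: Suc_le_eq)
  define S where "S = {d. d < m \<and> t dvd d}"
  have S_multiples: "{d. d < m \<and> n dvd d} \<subseteq> S"
    using assms by (auto simp: S_def intro: dvd_trans)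
  have "card S = (q - 1) * r"
    unfolding S_def m_eq n_eq mult.assoc[symmetric] by (rule card_dvd_less_mult[OF \<open>t > 0\<close>])
  moreover have "card {d. d < m \<and> n dvd d} = q - 1"
    unfolding m_eq by (rule card_dvd_less_mult[OF n_pos])
  ultimately have card_rest: "card (S - {d. d < m \<and> n dvd d}) = (q - 1) * (r - 1)"
    using S_multiples by (simp add: card_Diff_subset diff_mult_distrib2 S_def)
  have "x mod t = y mod t \<longleftrightarrow> (x + m - y) mod m \<in> S" if "y \<in> E" for x y
    using that E_subset m_pos mod_eq_iff_dvd_mod_diff[OF dvd_trans[OF assms n_dvd_m]]
    by (auto simp: S_def)
  then have "card {(x, y). x \<in> E \<and> y \<in> E \<and> x mod t = y mod t} = (\<Sum>d\<in>S. shift_overlap d)"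
    unfolding shift_overlap_def
    by (subst sum_card_shift_eq_card_pairs[OF E_subset]) (auto simp: S_def intro!: arg_cong[where f = card])
  also have "\<dots> = (\<Sum>d \<in> S - {d. d < m \<and> n dvd d}. shift_overlap d) + (\<Sum>d | d < m \<and> n dvd d. shift_overlap d)"
    by (rule sum.subset_diff[OF S_multiples]) (simp add: S_def)
  also have "(\<Sum>d \<in> S - {d. d < m \<and> n dvd d}. shift_overlap d) = (q - 1) * (r - 1) * (q - 1)"
    using card_rest shift_overlap_nonmultiple by (simp add: S_def)
  also have "(\<Sum>d | d < m \<and> n dvd d. shift_overlap d) = (q - 1) * ((q - 1) * (q + 1))"
    by (simp add: sum_shift_overlap_multiples card_E)
  also have "(q - 1) * (r - 1) * (q - 1) + (q - 1) * ((q - 1) * (q + 1)) = (q - 1) ^ 2 * (q + r)"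
  proof -
    obtain k where "q = Suc k"
      using q_ge_2 by (cases q) auto
    moreover obtain j where "r = Suc j"
      using \<open>r \<ge> 1\<close> by (cases r) auto
    ultimately show ?thesis
      by (simp add: power2_eq_square algebra_simps)
  qed
  finally show ?thesis
    by (simp add: r_def)
qed

lemma sum_card_D_residue_classes:
  assumes "t > 0"
  shows "(\<Sum>u<t. card {i \<in> D. i mod t = u}) = q + 1"
proof -
  have "(\<lambda>i. i mod t) ` D \<subseteq> {..<t}"
    using assms by auto
  then show ?thesis
    using sum.group[of D "{..<t}" "\<lambda>i. i mod t" "\<lambda>_. 1 :: nat"] finite_subset[OF D_subset] card_D
    by simp
qed

lemma sum_square_card_D_residue_classes:
  assumes "t dvd n"
  shows "(\<Sum>u<t. card {i \<in> D. i mod t = u} ^ 2) = q + n div t"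
proof -
  have "t > 0"
    using assms n_pos by (auto intro: gr0I)
  have "(q - 1) ^ 2 * (\<Sum>u<t. card {i \<in> D. i mod t = u} ^ 2) = (\<Sum>u<t. card {k \<in> E. k mod t = u} ^ 2)"
    by (simp add: sum_distrib_left card_E_residue_class[OF assms] power_mult_distrib)
  also have "\<dots> = card {(x, y). x \<in> E \<and> y \<in> E \<and> x mod t = y mod t}"
    by (rule card_pairs_same_image[symmetric]) (use \<open>t > 0\<close> E_subset finite_subset in auto)
  also have "\<dots> = (q - 1) ^ 2 * (q + n div t)"
    by (rule card_E_pairs_congruent[OF assms])
  finally show ?thesis
    using q_ge_2 by simp
qed

lemma card_line_points_Int_orbit_O:
  "card (line_points q \<alpha> L \<inter> orbit_O q \<alpha> t u) = card {i \<in> D. i mod t = u}"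
proof -
  have "line_points q \<alpha> L \<inter> orbit_O q \<alpha> t u = pg_point q \<alpha> ` {i \<in> D. i mod t = u}"
  proof
    show "line_points q \<alpha> L \<inter> orbit_O q \<alpha> t u \<subseteq> pg_point q \<alpha> ` {i \<in> D. i mod t = u}"
    proof
      fix P assume "P \<in> line_points q \<alpha> L \<inter> orbit_O q \<alpha> t u"
      then obtain i j where "P = pg_point q \<alpha> i" "i < n" "pg_point q \<alpha> i \<subseteq> L"
          "P = pg_point q \<alpha> j" "j < n" "j mod t = u"
        unfolding line_points_def orbit_O_def n_def by blast
      then show "P \<in> pg_point q \<alpha> ` {i \<in> D. i mod t = u}"
        using pg_point_eq_iff pg_point_subset_L_iff by (auto simp: D_def)
    qed
  qed (auto simp: line_points_def orbit_O_def D_def n_def pg_point_subset_L_iff)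
  moreover have "inj_on (pg_point q \<alpha>) {i \<in> D. i mod t = u}"
    using pg_point_eq_iff D_subset by (auto simp: inj_on_def)
  ultimately show ?thesis
    by (simp add: card_image)
qed

lemma card_D_residue_class_le_mult:
  assumes "tau_fixed p q \<alpha> L" "coprime p n" "t dvd n"
  shows "card {i \<in> D. i mod t = u} \<le> card {i \<in> D. i mod t = (p * u) mod t}"
proof (rule card_inj_on_le)
  show "inj_on (\<lambda>i. (i * p) mod n) {i \<in> D. i mod t = u}"
  proof (rule inj_onI)
    fix i j assume "i \<in> {i \<in> D. i mod t = u}" "j \<in> {i \<in> D. i mod t = u}" "(i * p) mod n = (j * p) mod n"
    moreover from this have "[i = j] (mod n)"
      using assms(2) cong_mult_rcancel_nat[of p n i j] by (simp add: cong_def)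
    ultimately show "i = j"
      using D_subset cong_less_modulus_unique_nat by blast
  qed
  show "(\<lambda>i. (i * p) mod n) ` {i \<in> D. i mod t = u} \<subseteq> {i \<in> D. i mod t = (p * u) mod t}"
  proof clarify
    fix i assume "i \<in> D" "u = i mod t"
    then have "\<alpha> ^ ((i * p) mod n) \<in> L"
      using assms(1) pg_point_subset_L_iff unfolding tau_fixed_def D_def n_def by blast
    moreover have "(i * p) mod n mod t = (p * (i mod t)) mod t"
      using assms(3) by (simp add: mod_mod_cancel mod_mult_right_eq mult.commute)
    ultimately show "(i * p) mod n \<in> D \<and> (i * p) mod n mod t = (p * (i mod t)) mod t"
      using n_pos by (simp add: D_def)
  qed
qed (simp add: finite_D)

lemma card_D_residue_class_mult:
  assumes "tau_fixed p q \<alpha> L" "coprime p n" "t dvd n" "u < t"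
  shows "card {i \<in> D. i mod t = (p * u) mod t} = card {i \<in> D. i mod t = u}"
proof -
  have "coprime p t"
    using coprime_divisors[OF dvd_refl assms(3) assms(2)] .
  then show ?thesis
    by (rule eq_comp_if_le_comp_permutation[where f = "\<lambda>u. card {i \<in> D. i mod t = u}",
          OF finite_lessThan bij_betw_mult_mod])
      (use card_D_residue_class_le_mult[OF assms(1-3)] assms(4) in auto)
qed


lemma moments_card_D_residue_classes:
  assumes "t dvd n"
  shows "real (card {i \<in> D. i mod t = 0}) + (\<Sum>u\<in>{1..<t}. real (card {i \<in> D. i mod t = u}))
      = real q + 1"
    and "real (card {i \<in> D. i mod t = 0}) ^ 2 + (\<Sum>u\<in>{1..<t}. real (card {i \<in> D. i mod t = u}) ^ 2)
      = (real q ^ 2 + (real t + 1) * real q + 1) / real t"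
proof -
  have "t > 0"
    using assms n_pos by (auto intro: gr0I)
  have split: "(\<Sum>u<t. f u) = f 0 + (\<Sum>u\<in>{1..<t}. f u)" for f :: "nat \<Rightarrow> real"
    using \<open>t > 0\<close> by (simp add: atLeast0LessThan[symmetric] sum.atLeast_Suc_lessThan)
  show "real (card {i \<in> D. i mod t = 0}) + (\<Sum>u\<in>{1..<t}. real (card {i \<in> D. i mod t = u}))
      = real q + 1"
    using split[of "\<lambda>u. real (card {i \<in> D. i mod t = u})"] sum_card_D_residue_classes[OF \<open>t > 0\<close>]
    by (simp flip: of_nat_sum)
  have "real q + real (n div t) = (real q ^ 2 + (real t + 1) * real q + 1) / real t"
    using assms \<open>t > 0\<close> by (auto simp: n_def real_of_nat_div field_simps)
  then show "real (card {i \<in> D. i mod t = 0}) ^ 2 + (\<Sum>u\<in>{1..<t}. real (card {i \<in> D. i mod t = u}) ^ 2)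
      = (real q ^ 2 + (real t + 1) * real q + 1) / real t"
    using split[of "\<lambda>u. real (card {i \<in> D. i mod t = u}) ^ 2"] sum_square_card_D_residue_classes[OF assms]
    by (simp flip: of_nat_sum of_nat_power)
qed

end

theorem corollary2:
  fixes \<alpha> :: "'a::{field,finite}" and p h q t :: nat and L :: "'a set"
    and w :: "nat \<Rightarrow> nat" and R :: "nat set"
  assumes "prime p" and "h \<ge> 1" and "q = p ^ h"
    and "card (UNIV :: 'a set) = q ^ 3"
    and "primitive_elem \<alpha>"
    and "pg_line q L" and "tau_fixed p q \<alpha> L"
    and "t dvd q^2 + q + 1" and "prime t"
    and "\<And>u. w u = card (line_points q \<alpha> L \<inter> orbit_O q \<alpha> t u)"
    and "R \<subseteq> {1..<t}"
    and "\<And>i. i \<in> {1..<t} \<Longrightarrow> card (R \<inter> mult_orbit p t i) = 1"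
  shows "real (w 0) + real (t - 1) / real (s_pt p t) * (\<Sum>i\<in>R. real (w i)) = real q + 1
       \<and> real (w 0) ^ 2 + real (t - 1) / real (s_pt p t) * (\<Sum>i\<in>R. real (w i) ^ 2)
           = (real q ^ 2 + (real t + 1) * real q + 1) / real t"
proof -
  have "p ^ 1 \<le> p ^ h"
    using assms(2) prime_gt_0_nat[OF assms(1)] by (intro power_increasing) auto
  then interpret singer_line \<alpha> q L
    using prime_ge_2_nat[OF assms(1)] assms(3-6) by unfold_locales simp_all
  have "p dvd q"
    using assms(2,3) by (simp add: dvd_power)
  then have "t dvd n" "\<not> p dvd n"
    using assms(8) prime_not_dvd_square_add_add_one[OF assms(1)] by (simp_all add: n_def)
  then have "coprime p n" "\<not> t dvd p"
    using assms(1,9) prime_imp_coprime primes_dvd_imp_eq by blast+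
  have w_eq: "w u = card {i \<in> D. i mod t = u}" for u
    using assms(10) card_line_points_Int_orbit_O by simp
  have w_invariant: "w ((p * u) mod t) = w u" if "u < t" for u
    using card_D_residue_class_mult[OF assms(7) \<open>coprime p n\<close> \<open>t dvd n\<close> that] by (simp add: w_eq)
  have transversal: "real (t - 1) / real (s_pt p t) * (\<Sum>i\<in>R. f (w i)) = (\<Sum>u\<in>{1..<t}. f (w u))"
    for f :: "nat \<Rightarrow> real"
  proof (rule sum_units_eq_sum_transversal[OF assms(9) \<open>\<not> t dvd p\<close> assms(11,12)])
    fix u assume "u < t"
    then show "f (w ((p * u) mod t)) = f (w u)"
      using w_invariant by simp
  qed
  show ?thesis
    using transversal[of real] transversal[of "\<lambda>x. real x ^ 2"]
      moments_card_D_residue_classes[OF \<open>t dvd n\<close>]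
    by (simp add: w_eq)
qed

end
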